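(* Consider the consistent-read asynchronous iteration defined in the context with step size $\beta=1$, an arbitrary deterministic starting vector $x_0$, a nonnegative integer $\tau$, and deterministic delay indices $k(j)$ satisfying $j-\tau\le k(j)\le j$ for all $j$. Let $\rho=\frac1n\|A\|_\infty=\max_{l}\frac1n\sum_{r=1}^n|A_{lr}|$, and suppose $2\rho\tau<1$. Set $\nu_\tau=1-2\rho\tau$. Then: (a) For every integer $m\ge \frac{\log(1/2)}{\log(1-\lambda_{\max}/n)}$, \[E_m\le\Big(1-\frac{\nu_\tau}{2\kappa}\Big)E_0.\] (b) Let $T_0=\big\lceil \frac{\log(1/2)}{\log(1-\lambda_{\max}/n)}\big\rceil$, $T=T_0+\tau$, and \[\chi=\frac{\rho\tau^2\lambda_{\max}(1-\lambda_{\max}/n)^{-2\tau}}{n}.\] Then for every integer $r\ge1$ and every $m\ge rT$, \[E_m\le\Big(1-\frac{\nu_\tau}{2\kappa}\Big)\Big(1-\frac{\nu_\tau(1-\lambda_{\max}/n)^{\tau}}{2\kappa}+\chi\Big)^{r-1}E_0.\]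
   Context: Let $n\ge2$ and let $A\in\mathbb{R}^{n\times n}$ be symmetric positive definite with all diagonal entries equal to $1$; let $b\in\mathbb{R}^n$ and $x^\star=A^{-1}b$. Let $\lambda_{\min},\lambda_{\max}$ be the smallest and largest eigenvalues of $A$ and $\kappa=\lambda_{\max}/\lambda_{\min}$. Write $(x,y)_A=y^TAx$ and $\|x\|_A=\sqrt{(x,x)_A}$; $e^{(1)},\dots,e^{(n)}$ are the standard basis vectors. Consistent-read iteration: let $d_0,d_1,\dots$ be i.i.d. random vectors, each uniformly distributed on $\{e^{(1)},\dots,e^{(n)}\}$; let $\tau\ge0$ be an integer and $k(0),k(1),\dots$ deterministic integers (not depending on the $d_j$) with $j-\tau\le k(j)\le j$; given $x_0\in\mathbb{R}^n$ and a step size $\beta$, define for $j\ge0$ \[\gamma_j=(x^\star-x_{k(j)},d_j)_A,\qquad x_{j+1}=x_j+\beta\gamma_jd_j.\] (Note $\gamma_j=d_j^T(b-Ax_{k(j)})$.) Define $E_m=\mathbb{E}[\|x_m-x^\star\|_A^2]$. *)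

theory Defs
  imports "HOL-Analysis.Analysis" "HOL-Probability.Probability"
begin

definition mat_eigenvalues :: "real^'n^'n \<Rightarrow> real set" where
  "mat_eigenvalues A = {l. \<exists>v. v \<noteq> 0 \<and> A *v v = l *s v}"

definition lam_max :: "real^'n^'n \<Rightarrow> real" where
  "lam_max A = Max (mat_eigenvalues A)"

definition lam_min :: "real^'n^'n \<Rightarrow> real" where
  "lam_min A = Min (mat_eigenvalues A)"

definition spd :: "real^'n^'n \<Rightarrow> bool" where
  "spd A \<longleftrightarrow> transpose A = A \<and> (\<forall>x. x \<noteq> 0 \<longrightarrow> x \<bullet> (A *v x) > 0)"

definition A_inner :: "real^'n^'n \<Rightarrow> real^'n \<Rightarrow> real^'n \<Rightarrow> real" where
  "A_inner A x y = y \<bullet> (A *v x)"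

definition A_norm_sq :: "real^'n^'n \<Rightarrow> real^'n \<Rightarrow> real" where
  "A_norm_sq A x = A_inner A x x"

definition inf_norm :: "real^'n^'n \<Rightarrow> real" where
  "inf_norm A = Max (range (\<lambda>l. \<Sum>r\<in>UNIV. \<bar>A $ l $ r\<bar>))"

text \<open>History of the consistent-read iteration driven by the direction index sequence d
  (d j = i means d_j = e^(i)). hist m i = x_i for i \<le> m.\<close>
primrec cr_hist :: "real^'n^'n \<Rightarrow> real^'n \<Rightarrow> real^'n \<Rightarrow> real \<Rightarrow> (nat \<Rightarrow> nat)
                      \<Rightarrow> (nat \<Rightarrow> 'n) \<Rightarrow> nat \<Rightarrow> (nat \<Rightarrow> real^'n)" where
  "cr_hist A b x0 \<beta> k d 0 = (\<lambda>i. x0)"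
| "cr_hist A b x0 \<beta> k d (Suc j) =
     (let h = cr_hist A b x0 \<beta> k d j;
          e = axis (d j) (1::real);
          xstar = matrix_inv A *v b;
          \<gamma> = A_inner A (xstar - h (k j)) e
      in h(Suc j := h j + (\<beta> * \<gamma>) *\<^sub>R e))"

definition cr_iter :: "real^'n^'n \<Rightarrow> real^'n \<Rightarrow> real^'n \<Rightarrow> real \<Rightarrow> (nat \<Rightarrow> nat)
                      \<Rightarrow> (nat \<Rightarrow> 'n) \<Rightarrow> nat \<Rightarrow> real^'n" where
  "cr_iter A b x0 \<beta> k d m = cr_hist A b x0 \<beta> k d m m"

definition dir_pmf :: "nat \<Rightarrow> (nat \<Rightarrow> 'n::finite) pmf" where
  "dir_pmf m = Pi_pmf {..<m} undefined (\<lambda>_. pmf_of_set UNIV)"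

definition cr_err :: "real^'n^'n \<Rightarrow> real^'n \<Rightarrow> real^'n \<Rightarrow> real \<Rightarrow> (nat \<Rightarrow> nat) \<Rightarrow> nat \<Rightarrow> real" where
  "cr_err A b x0 \<beta> k m = measure_pmf.expectation (dir_pmf m)
      (\<lambda>d. A_norm_sq A (cr_iter A b x0 \<beta> k d m - matrix_inv A *v b))"

end

theory Submission
  imports Defs
begin

text \<open>
  Write e_j = x_j - x* and g_j = (A e_k(j))_d_j = - gamma_j, so that e_(j+1) = e_j - g_j e^(d_j).
  Since A has unit diagonal, the A-energy decreases by g_j^2 up to the stale cross terms
  2 g_j g_l A_(d_j,d_l) with k(j) <= l < j. Bounding them by |A_(d_j,d_l)| (g_j^2 + g_l^2) and
  averaging over the one direction that the other factor does not involve turns |A_(d_j,d_l)|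
  into a row sum of |A| divided by n. With G_j = E g_j^2 this gives
    E_(j+1) <= E_j - G_j + rho * (sum over k(j) <= l < j of G_j + G_l),
  together with lambda_min E_k(j) <= n G_j <= lambda_max E_k(j) and E_(j+1) >= q E_j for
  q = 1 - lambda_max/n. Summed over a block [s, m) every G_l is charged at most tau times:
    E_m <= E_s - nu * (sum over [s, m) of G_j) + rho tau * (sum over [s - tau, s) of G_l).
  By the geometric lower bound on E the first sum is at least q^tau E_s / (2 kappa) as soon as
  m >= s + tau + T0 with q^T0 <= 1/2, and the second is at most tau lambda_max E_s / (n q^(2 tau)).
\<close>

section \<open>Symmetric matrices\<close>

lemma matrix_vector_mult_axis_component: "(M *v axis p (1::real)) $ i = M $ i $ p"
  by (simp add: matrix_vector_mul_component inner_axis)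

lemma inner_matrix_symmetric:
  fixes M :: "real^'n^'n"
  assumes "transpose M = M"
  shows "v \<bullet> (M *v w) = w \<bullet> (M *v v)"
proof -
  have "v \<bullet> (M *v w) = (transpose M *v v) \<bullet> w"
    by (simp add: dot_lmul_matrix)
  then show ?thesis
    using assms by (simp add: inner_commute)
qed

lemma quadratic_form_add_scaleR:
  fixes M :: "real^'n^'n"
  assumes "transpose M = M"
  shows "(u + t *\<^sub>R w) \<bullet> (M *v (u + t *\<^sub>R w))
       = u \<bullet> (M *v u) + 2 * t * (w \<bullet> (M *v u)) + t\<^sup>2 * (w \<bullet> (M *v w))"
  using inner_matrix_symmetric[OF assms, of u w]
  by (simp add: matrix_vector_right_distrib matrix_vector_mult_scaleR inner_add_left inner_add_right
      power2_eq_square algebra_simps)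

lemma quadratic_form_minus_axis:
  fixes M :: "real^'n^'n"
  assumes "transpose M = M"
  shows "(v - c *\<^sub>R axis p 1) \<bullet> (M *v (v - c *\<^sub>R axis p 1))
       = v \<bullet> (M *v v) - 2 * c * (M *v v) $ p + c\<^sup>2 * M $ p $ p"
  using quadratic_form_add_scaleR[OF assms, of v "- c" "axis p 1"]
  by (simp add: inner_axis' matrix_vector_mult_axis_component)

lemma linear_coeff_zero_if_quadratic_nonpos:
  fixes a c :: real
  assumes "\<And>t. a * t + c * t\<^sup>2 \<le> 0"
  shows "a = 0"
proof -
  define s where "s = 1 / (2 * (\<bar>c\<bar> + 1))"
  have "s > 0" "\<bar>c\<bar> * s < 1"
    unfolding s_def by (simp_all add: add_pos_nonneg field_simps)
  moreover have "- (\<bar>c\<bar> * s) \<le> c * s"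
    using \<open>s > 0\<close> by (simp add: abs_if)
  ultimately have pos: "s * (1 + c * s) > 0"
    by simp
  have "a\<^sup>2 * (s * (1 + c * s)) = a * (a * s) + c * (a * s)\<^sup>2"
    by (simp add: power2_eq_square algebra_simps)
  also have "\<dots> \<le> 0"
    by (rule assms)
  finally show ?thesis
    using pos by (metis linorder_not_le mult_pos_pos zero_less_power2)
qed

text \<open>A maximiser of the Rayleigh quotient on the unit sphere is an eigenvector: along
  \<open>u + t w\<close> with \<open>w = M u - \<mu> u\<close> the quotient would otherwise increase to first order in \<open>t\<close>.\<close>
lemma symmetric_rayleigh_max:
  fixes M :: "real^'n^'n"
  assumes sym: "transpose M = M"
  shows "\<exists>\<mu> u. u \<noteq> 0 \<and> M *v u = \<mu> *\<^sub>R u \<and> (\<forall>v. v \<bullet> (M *v v) \<le> \<mu> * (norm v)\<^sup>2)"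
proof -
  define f where "f v = v \<bullet> (M *v v)" for v :: "real^'n"
  have "continuous_on (sphere 0 1) f"
    unfolding f_def by (intro continuous_on_inner continuous_on_id matrix_vector_mult_linear_continuous_on)
  moreover have "axis undefined 1 \<in> sphere (0::real^'n) 1"
    by simp
  ultimately obtain u where "u \<in> sphere 0 1" and umax: "\<And>y. y \<in> sphere 0 1 \<Longrightarrow> f y \<le> f u"
    using continuous_attains_sup[OF compact_sphere, of 0 1 f] by blast
  then have u: "norm u = 1" "u \<bullet> u = 1"
    by (simp_all add: dot_square_norm)
  define \<mu> where "\<mu> = f u"
  have bound: "f v \<le> \<mu> * (norm v)\<^sup>2" for v
  proof (cases "v = 0")
    case False
    have "f ((1 / norm v) *\<^sub>R v) \<le> \<mu>"
      unfolding \<mu>_def by (rule umax) (use False in simp)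
    then show ?thesis
      using False by (simp add: f_def matrix_vector_mult_scaleR power2_eq_square field_simps)
  qed (simp add: f_def)
  define w where "w = M *v u - \<mu> *\<^sub>R u"
  have "(2 * (w \<bullet> w)) * t + (f w - \<mu> * (norm w)\<^sup>2) * t\<^sup>2 \<le> 0" for t
  proof -
    have "f (u + t *\<^sub>R w) = \<mu> + 2 * t * (w \<bullet> (M *v u)) + t\<^sup>2 * f w"
      unfolding f_def quadratic_form_add_scaleR[OF sym] \<mu>_def f_def ..
    moreover have "(norm (u + t *\<^sub>R w))\<^sup>2 = 1 + 2 * t * (u \<bullet> w) + t\<^sup>2 * (norm w)\<^sup>2"
      using \<open>u \<bullet> u = 1\<close> unfolding power2_norm_eq_inner
      by (simp add: inner_add_left inner_add_right inner_commute power2_eq_square algebra_simps)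
    moreover have "w \<bullet> (M *v u) - \<mu> * (u \<bullet> w) = w \<bullet> w"
      unfolding w_def by (simp add: inner_diff_left inner_diff_right algebra_simps inner_commute)
    ultimately show ?thesis
      using bound[of "u + t *\<^sub>R w"] by (simp add: algebra_simps)
  qed
  then have "w = 0"
    using linear_coeff_zero_if_quadratic_nonpos by fastforce
  then show ?thesis
    using u bound unfolding w_def f_def by (intro exI[of _ \<mu>] exI[of _ u]) auto
qed

lemma symmetric_rayleigh_min:
  fixes M :: "real^'n^'n"
  assumes "transpose M = M"
  shows "\<exists>\<mu> u. u \<noteq> 0 \<and> M *v u = \<mu> *\<^sub>R u \<and> (\<forall>v. \<mu> * (norm v)\<^sup>2 \<le> v \<bullet> (M *v v))"
proof -
  have neg: "(- M) *v v = - (M *v v)" for v :: "real^'n"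
    by (simp add: matrix_vector_mult_def vec_eq_iff sum_negf)
  have "transpose (- M) = - transpose M"
    by (simp add: transpose_def vec_eq_iff)
  then have "transpose (- M) = - M"
    using assms by simp
  then obtain \<mu> u where "u \<noteq> 0" "(- M) *v u = \<mu> *\<^sub>R u" "\<forall>v. v \<bullet> ((- M) *v v) \<le> \<mu> * (norm v)\<^sup>2"
    using symmetric_rayleigh_max by blast
  then have "u \<noteq> 0" "M *v u = (- \<mu>) *\<^sub>R u" "\<forall>v. - \<mu> * (norm v)\<^sup>2 \<le> v \<bullet> (M *v v)"
    by (auto simp: neg minus_le_iff) (metis minus_minus)
  then show ?thesis
    by blast
qed

lemma finite_mat_eigenvalues:
  fixes M :: "real^'n^'n"
  assumes sym: "transpose M = M"
  shows "finite (mat_eigenvalues M)"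
proof -
  let ?S = "mat_eigenvalues M"
  define v where "v l = (SOME v. v \<noteq> 0 \<and> M *v v = l *s v)" for l
  have v: "v l \<noteq> 0 \<and> M *v v l = l *\<^sub>R v l" if "l \<in> ?S" for l
    using someI_ex[of "\<lambda>v. v \<noteq> 0 \<and> M *v v = l *s v"] that
    by (simp add: v_def mat_eigenvalues_def scalar_mult_eq_scaleR)
  have orth: "v l \<bullet> v l' = 0" if "l \<in> ?S" "l' \<in> ?S" "l \<noteq> l'" for l l'
  proof -
    have "l * (v l \<bullet> v l') = v l' \<bullet> (M *v v l)"
      using v[OF that(1)] by (simp add: inner_commute)
    also have "\<dots> = l' * (v l \<bullet> v l')"
      using v[OF that(2)] inner_matrix_symmetric[OF sym, of "v l'" "v l"] by simp
    finally show ?thesis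
      using that(3) by simp
  qed
  have "inj_on v ?S"
  proof (rule inj_onI)
    fix l l' assume "l \<in> ?S" "l' \<in> ?S" "v l = v l'"
    then show "l = l'"
      using orth[of l l'] v[of l] by auto
  qed
  moreover have "independent (v ` ?S)"
    using orth v by (intro pairwise_orthogonal_independent) (auto simp: pairwise_def orthogonal_def)
  then have "finite (v ` ?S)"
    using independent_bound by blast
  ultimately show ?thesis
    using finite_imageD by blast
qed

lemma mat_eigenvalue_le:
  fixes M :: "real^'n^'n"
  assumes "l \<in> mat_eigenvalues M" "\<forall>v. v \<bullet> (M *v v) \<le> \<mu> * (norm v)\<^sup>2"
  shows "l \<le> \<mu>"
proof -
  obtain v where v: "v \<noteq> 0" "M *v v = l *\<^sub>R v"
    using assms(1) by (auto simp: mat_eigenvalues_def scalar_mult_eq_scaleR)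
  then have "l * (norm v)\<^sup>2 = v \<bullet> (M *v v)"
    by (simp add: power2_norm_eq_inner)
  also have "\<dots> \<le> \<mu> * (norm v)\<^sup>2"
    using assms(2) by blast
  finally show ?thesis
    using v by simp
qed

lemma mat_eigenvalue_ge:
  fixes M :: "real^'n^'n"
  assumes "l \<in> mat_eigenvalues M" "\<forall>v. \<mu> * (norm v)\<^sup>2 \<le> v \<bullet> (M *v v)"
  shows "\<mu> \<le> l"
proof -
  obtain v where v: "v \<noteq> 0" "M *v v = l *\<^sub>R v"
    using assms(1) by (auto simp: mat_eigenvalues_def scalar_mult_eq_scaleR)
  have "\<mu> * (norm v)\<^sup>2 \<le> v \<bullet> (M *v v)"
    using assms(2) by blast
  also have "\<dots> = l * (norm v)\<^sup>2"
    using v by (simp add: power2_norm_eq_inner)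
  finally show ?thesis
    using v by simp
qed

lemma lam_max_symmetric:
  fixes M :: "real^'n^'n"
  assumes "transpose M = M"
  shows "lam_max M \<in> mat_eigenvalues M" and "\<forall>v. v \<bullet> (M *v v) \<le> lam_max M * (norm v)\<^sup>2"
proof -
  obtain \<mu> u where u: "u \<noteq> 0" "M *v u = \<mu> *\<^sub>R u" and bound: "\<forall>v. v \<bullet> (M *v v) \<le> \<mu> * (norm v)\<^sup>2"
    using symmetric_rayleigh_max[OF assms] by blast
  then have eig: "\<mu> \<in> mat_eigenvalues M"
    by (auto simp: mat_eigenvalues_def scalar_mult_eq_scaleR)
  then have "lam_max M = \<mu>"
    unfolding lam_max_def using bound
    by (intro Max_eqI finite_mat_eigenvalues[OF assms]) (auto intro: mat_eigenvalue_le)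
  then show "lam_max M \<in> mat_eigenvalues M" "\<forall>v. v \<bullet> (M *v v) \<le> lam_max M * (norm v)\<^sup>2"
    using eig bound by simp_all
qed

lemma lam_min_symmetric:
  fixes M :: "real^'n^'n"
  assumes "transpose M = M"
  shows "lam_min M \<in> mat_eigenvalues M" and "\<forall>v. lam_min M * (norm v)\<^sup>2 \<le> v \<bullet> (M *v v)"
proof -
  obtain \<mu> u where u: "u \<noteq> 0" "M *v u = \<mu> *\<^sub>R u" and bound: "\<forall>v. \<mu> * (norm v)\<^sup>2 \<le> v \<bullet> (M *v v)"
    using symmetric_rayleigh_min[OF assms] by blast
  then have eig: "\<mu> \<in> mat_eigenvalues M"
    by (auto simp: mat_eigenvalues_def scalar_mult_eq_scaleR)
  then have "lam_min M = \<mu>"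
    unfolding lam_min_def using bound
    by (intro Min_eqI finite_mat_eigenvalues[OF assms]) (auto intro: mat_eigenvalue_ge)
  then show "lam_min M \<in> mat_eigenvalues M" "\<forall>v. lam_min M * (norm v)\<^sup>2 \<le> v \<bullet> (M *v v)"
    using eig bound by simp_all
qed

lemma inf_norm_ge_row_sum: "(\<Sum>j\<in>UNIV. \<bar>M $ i $ j\<bar>) \<le> inf_norm M"
  unfolding inf_norm_def by (rule Max_ge) auto

lemma inf_norm_nonneg: "0 \<le> inf_norm M"
  by (rule order_trans[OF sum_nonneg inf_norm_ge_row_sum]) simp

text \<open>Gershgorin: look at the row of a largest component of an eigenvector.\<close>
lemma abs_mat_eigenvalue_le_inf_norm:
  fixes M :: "real^'n^'n"
  assumes "l \<in> mat_eigenvalues M"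
  shows "\<bar>l\<bar> \<le> inf_norm M"
proof -
  obtain v where v: "v \<noteq> 0" "M *v v = l *\<^sub>R v"
    using assms by (auto simp: mat_eigenvalues_def scalar_mult_eq_scaleR)
  have "Max (range (\<lambda>c. \<bar>v $ c\<bar>)) \<in> range (\<lambda>c. \<bar>v $ c\<bar>)"
    by (rule Max_in) auto
  then obtain p where "Max (range (\<lambda>c. \<bar>v $ c\<bar>)) = \<bar>v $ p\<bar>"
    by blast
  then have p: "\<bar>v $ c\<bar> \<le> \<bar>v $ p\<bar>" for c
    using Max_ge[of "range (\<lambda>c. \<bar>v $ c\<bar>)" "\<bar>v $ c\<bar>"] by simp
  have "v $ p \<noteq> 0"
  proof
    assume "v $ p = 0"
    then have "v $ c = 0" for c
      using p[of c] by simp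
    then show False
      using v(1) by (simp add: vec_eq_iff)
  qed
  have "\<bar>l\<bar> * \<bar>v $ p\<bar> = \<bar>\<Sum>c\<in>UNIV. M $ p $ c * v $ c\<bar>"
    using arg_cong[OF v(2), of "\<lambda>w. \<bar>w $ p\<bar>"] by (simp add: matrix_vector_mult_def abs_mult)
  also have "\<dots> \<le> (\<Sum>c\<in>UNIV. \<bar>M $ p $ c\<bar> * \<bar>v $ p\<bar>)"
    by (rule order_trans[OF sum_abs]) (auto intro!: sum_mono mult_left_mono p simp: abs_mult)
  also have "\<dots> \<le> inf_norm M * \<bar>v $ p\<bar>"
    by (simp add: sum_distrib_right[symmetric] mult_right_mono inf_norm_ge_row_sum)
  finally show ?thesis
    using \<open>v $ p \<noteq> 0\<close> by simp
qed


section \<open>Symmetric positive definite matrices with unit diagonal\<close>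

locale spd_unit_diag =
  fixes A :: "real^'n^'n"
  assumes spd: "spd A" and unit_diag: "\<forall>i. A $ i $ i = 1"
begin

lemma symmetric: "transpose A = A"
  using spd by (simp add: spd_def)

lemma entry_symmetric: "A $ i $ j = A $ j $ i"
  using symmetric by (metis transpose_def vec_lambda_beta)

lemma quadratic_form_pos: "x \<noteq> 0 \<Longrightarrow> 0 < x \<bullet> (A *v x)"
  using spd by (simp add: spd_def)

lemma quadratic_form_nonneg: "0 \<le> x \<bullet> (A *v x)"
  by (cases "x = 0") (auto dest: quadratic_form_pos intro: less_imp_le)

lemma Cauchy_Schwarz_quadratic_form: "(x \<bullet> (A *v y))\<^sup>2 \<le> (x \<bullet> (A *v x)) * (y \<bullet> (A *v y))"
proof (cases "y = 0")
  case False
  then have qy: "0 < y \<bullet> (A *v y)"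
    by (rule quadratic_form_pos)
  define B where "B = x \<bullet> (A *v y)"
  have "0 \<le> (x + (- (B / (y \<bullet> (A *v y)))) *\<^sub>R y) \<bullet> (A *v (x + (- (B / (y \<bullet> (A *v y)))) *\<^sub>R y))"
    by (rule quadratic_form_nonneg)
  also have "\<dots> = x \<bullet> (A *v x) - B\<^sup>2 / (y \<bullet> (A *v y))"
    unfolding quadratic_form_add_scaleR[OF symmetric] B_def
    using qy inner_matrix_symmetric[OF symmetric, of x y] by (simp add: field_simps power2_eq_square)
  finally show ?thesis
    unfolding B_def using qy by (simp add: divide_le_eq)
qed simp

lemma lam_min_pos: "0 < lam_min A"
proof -
  obtain v where v: "v \<noteq> 0" "A *v v = lam_min A *\<^sub>R v"
    using lam_min_symmetric(1)[OF symmetric] by (auto simp: mat_eigenvalues_def scalar_mult_eq_scaleR)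
  then have "0 < lam_min A * (norm v)\<^sup>2"
    using quadratic_form_pos[OF v(1)] by (simp add: power2_norm_eq_inner)
  then show ?thesis
    by (simp add: zero_less_mult_iff)
qed

lemma lam_min_le_lam_max: "lam_min A \<le> lam_max A"
  using mat_eigenvalue_le[OF lam_min_symmetric(1) lam_max_symmetric(2)] symmetric by blast

lemma lam_max_ge_1: "1 \<le> lam_max A"
proof -
  have "axis undefined 1 \<bullet> (A *v axis undefined 1) = 1"
    using unit_diag by (simp add: inner_axis' matrix_vector_mult_axis_component)
  moreover have "axis undefined 1 \<bullet> (A *v axis undefined 1) \<le> lam_max A * (norm (axis undefined (1::real) :: real^'n))\<^sup>2"
    using lam_max_symmetric(2)[OF symmetric] by blast
  ultimately show ?thesis
    by simp
qed

lemma norm_mult_sq_le: "(norm (A *v x))\<^sup>2 \<le> lam_max A * (x \<bullet> (A *v x))"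
proof (cases "A *v x = 0")
  case False
  let ?y = "A *v x"
  have "(norm ?y)\<^sup>2 = x \<bullet> (A *v ?y)"
    unfolding power2_norm_eq_inner using inner_matrix_symmetric[OF symmetric, of ?y x] by simp
  then have "((norm ?y)\<^sup>2)\<^sup>2 \<le> (x \<bullet> (A *v x)) * (?y \<bullet> (A *v ?y))"
    using Cauchy_Schwarz_quadratic_form by metis
  also have "\<dots> \<le> (x \<bullet> (A *v x)) * (lam_max A * (norm ?y)\<^sup>2)"
    using lam_max_symmetric(2)[OF symmetric] by (intro mult_left_mono quadratic_form_nonneg) auto
  finally show ?thesis
    using False by (simp add: power2_eq_square algebra_simps)
qed (use lam_max_ge_1 quadratic_form_nonneg in simp)

lemma norm_mult_sq_ge: "lam_min A * (x \<bullet> (A *v x)) \<le> (norm (A *v x))\<^sup>2"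
proof (cases "x \<bullet> (A *v x) = 0")
  case False
  then have qx: "0 < x \<bullet> (A *v x)"
    using quadratic_form_nonneg[of x] by simp
  have "lam_min A * (x \<bullet> (A *v x))\<^sup>2 \<le> (lam_min A * (norm x)\<^sup>2) * (norm (A *v x))\<^sup>2"
    using Cauchy_Schwarz_ineq[of x "A *v x"] lam_min_pos
    by (simp add: mult_left_mono power2_norm_eq_inner)
  also have "\<dots> \<le> (x \<bullet> (A *v x)) * (norm (A *v x))\<^sup>2"
    using lam_min_symmetric(2)[OF symmetric] by (intro mult_right_mono) auto
  finally show ?thesis
    using qx by (simp add: power2_eq_square)
qed simp

lemma abs_offdiag_less_1:
  assumes "i \<noteq> j"
  shows "\<bar>A $ i $ j\<bar> < 1"
proof -
  define s where "s = sgn (A $ j $ i)"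
  have "(axis i (1::real) - s *\<^sub>R axis j 1) $ i = 1"
    using assms by (simp add: axis_def)
  then have "axis i (1::real) - s *\<^sub>R axis j 1 \<noteq> 0"
    by (metis zero_index zero_neq_one)
  then have "0 < (axis i 1 - s *\<^sub>R axis j 1) \<bullet> (A *v (axis i 1 - s *\<^sub>R axis j 1))"
    by (rule quadratic_form_pos)
  also have "\<dots> = 1 - 2 * s * A $ j $ i + s\<^sup>2"
    using quadratic_form_minus_axis[OF symmetric, of "axis i 1" s j] unit_diag
    by (simp add: inner_axis' matrix_vector_mult_axis_component)
  finally have "0 < 1 - 2 * s * A $ j $ i + s\<^sup>2" .
  then show ?thesis
    unfolding s_def using entry_symmetric[of i j] by (auto simp: sgn_if split: if_splits)
qed

lemma abs_entry_le_1: "\<bar>A $ i $ j\<bar> \<le> 1"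
  using unit_diag abs_offdiag_less_1[of i j] by (cases "i = j") auto

lemma inf_norm_less_card:
  assumes "CARD('n) \<ge> 2"
  shows "inf_norm A < real CARD('n)"
proof -
  have "inf_norm A \<in> range (\<lambda>l. \<Sum>r\<in>UNIV. \<bar>A $ l $ r\<bar>)"
    unfolding inf_norm_def by (rule Max_in) auto
  then obtain l where l: "inf_norm A = (\<Sum>r\<in>UNIV. \<bar>A $ l $ r\<bar>)"
    by blast
  have "\<not> (UNIV :: 'n set) \<subseteq> {l}"
  proof
    assume "(UNIV :: 'n set) \<subseteq> {l}"
    then have "CARD('n) \<le> card {l}"
      by (rule card_mono[rotated]) simp
    then show False
      using assms by simp
  qed
  then obtain c where "c \<noteq> l"
    by blast
  then have "(\<Sum>r\<in>UNIV. \<bar>A $ l $ r\<bar>) < (\<Sum>r\<in>(UNIV::'n set). 1)"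
    using abs_entry_le_1 abs_offdiag_less_1[of l c] by (intro sum_strict_mono_ex1) auto
  then show ?thesis
    using l by simp
qed

lemma lam_max_less_card: "CARD('n) \<ge> 2 \<Longrightarrow> lam_max A < real CARD('n)"
  using abs_le_D1[OF abs_mat_eigenvalue_le_inf_norm[OF lam_max_symmetric(1)[OF symmetric]]]
    inf_norm_less_card by linarith

end

section \<open>Uniformly random direction sequences\<close>

definition dir_space :: "nat \<Rightarrow> (nat \<Rightarrow> 'n::finite) set" where
  "dir_space N = PiE_dflt {..<N} undefined (\<lambda>_. UNIV)"

definition dir_avg :: "nat \<Rightarrow> ((nat \<Rightarrow> 'n::finite) \<Rightarrow> real) \<Rightarrow> real" where
  "dir_avg N f = (\<Sum>d\<in>dir_space N. f d) / real CARD('n) ^ N"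

lemma finite_dir_space [simp]: "finite (dir_space N)"
  unfolding dir_space_def by (rule finite_PiE_dflt) auto

lemma card_dir_space: "card (dir_space N :: (nat \<Rightarrow> 'n::finite) set) = CARD('n) ^ N"
  unfolding dir_space_def by (subst card_PiE_dflt) auto

lemma dir_pmf_eq_pmf_of_set: "dir_pmf N = pmf_of_set (dir_space N)"
  unfolding dir_pmf_def dir_space_def by (rule Pi_pmf_of_set) auto

lemma expectation_dir_pmf:
  fixes f :: "(nat \<Rightarrow> 'n::finite) \<Rightarrow> real"
  shows "measure_pmf.expectation (dir_pmf N) f = dir_avg N f"
proof -
  have "dir_space N \<noteq> {}"
    unfolding dir_space_def by simp
  then show ?thesis
    unfolding dir_pmf_eq_pmf_of_set dir_avg_def
    using integral_pmf_of_set[of "dir_space N" f] by (simp add: card_dir_space)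
qed

lemma expectation_dir_pmf_horizon:
  fixes f :: "(nat \<Rightarrow> 'n::finite) \<Rightarrow> real"
  assumes "j \<le> N" and local: "\<And>d d'. (\<forall>i<j. d i = d' i) \<Longrightarrow> f d = f d'"
  shows "measure_pmf.expectation (dir_pmf j) f = dir_avg N f"
proof -
  let ?restr = "\<lambda>d x. if x \<in> {..<j} then d x else undefined"
  have "dir_pmf j = map_pmf ?restr (dir_pmf N :: (nat \<Rightarrow> 'n) pmf)"
    unfolding dir_pmf_def by (rule Pi_pmf_subset) (use assms(1) in auto)
  then have "measure_pmf.expectation (dir_pmf j) f = measure_pmf.expectation (dir_pmf N) (\<lambda>d. f (?restr d))"
    by (simp only: integral_map_pmf)
  also have "(\<lambda>d. f (?restr d)) = f"
    by (rule ext, rule local) simp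
  finally show ?thesis
    by (simp add: expectation_dir_pmf)
qed

lemma dir_avg_mono: "(\<And>d. f d \<le> g d) \<Longrightarrow> dir_avg N f \<le> dir_avg N g"
  unfolding dir_avg_def by (intro divide_right_mono sum_mono) auto

lemma dir_avg_nonneg: "(\<And>d. 0 \<le> f d) \<Longrightarrow> 0 \<le> dir_avg N f"
  using dir_avg_mono[of "\<lambda>_. 0" f N] by (simp add: dir_avg_def)

lemma dir_avg_add: "dir_avg N (\<lambda>d. f d + g d) = dir_avg N f + dir_avg N g"
  unfolding dir_avg_def by (simp add: sum.distrib add_divide_distrib)

lemma dir_avg_diff: "dir_avg N (\<lambda>d. f d - g d) = dir_avg N f - dir_avg N g"
  unfolding dir_avg_def by (simp add: sum_subtractf diff_divide_distrib)

lemma dir_avg_cmult: "dir_avg N (\<lambda>d. c * f d) = c * dir_avg N f"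
  unfolding dir_avg_def by (simp add: sum_distrib_left)

lemma dir_avg_sum: "dir_avg N (\<lambda>d. \<Sum>l\<in>L. f l d) = (\<Sum>l\<in>L. dir_avg N (f l))"
  unfolding dir_avg_def by (simp add: sum.swap[of _ L] sum_divide_distrib)

lemma dir_avg_resample:
  fixes f :: "(nat \<Rightarrow> 'n::finite) \<Rightarrow> real"
  assumes "l < N"
  shows "dir_avg N f = dir_avg N (\<lambda>d. (\<Sum>i\<in>UNIV. f (d(l := i))) / real CARD('n))"
proof -
  have "(\<Sum>d\<in>dir_space N. \<Sum>i\<in>UNIV. f (d(l := i))) = (\<Sum>(d, i)\<in>dir_space N \<times> UNIV. f (d(l := i)))"
    by (simp add: sum.cartesian_product)
  also have "\<dots> = (\<Sum>(d, i)\<in>dir_space N \<times> (UNIV :: 'n set). f d)"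
    by (rule sum.reindex_bij_witness[where i="\<lambda>(d, i). (d(l := i), d l)" and j="\<lambda>(d, i). (d(l := i), d l)"])
      (use assms in \<open>auto simp: dir_space_def PiE_dflt_def\<close>)
  also have "\<dots> = real CARD('n) * (\<Sum>d\<in>dir_space N. f d)"
    by (simp add: sum.cartesian_product[symmetric] sum_distrib_left)
  finally show ?thesis
    unfolding dir_avg_def by (simp add: sum_divide_distrib[symmetric])
qed

lemma dir_avg_abs_entry_le:
  fixes M :: "real^'n^'n" and f :: "(nat \<Rightarrow> 'n) \<Rightarrow> real"
  assumes "p < N" "p \<noteq> q" and f_nonneg: "\<And>d. 0 \<le> f d"
    and f_indep: "\<And>d i. f (d(p := i)) = f d"
  shows "dir_avg N (\<lambda>d. \<bar>M $ d q $ d p\<bar> * f d) \<le> inf_norm M / real CARD('n) * dir_avg N f"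
proof -
  have "dir_avg N (\<lambda>d. \<bar>M $ d q $ d p\<bar> * f d)
      = dir_avg N (\<lambda>d. (\<Sum>i\<in>UNIV. \<bar>M $ d q $ i\<bar>) / real CARD('n) * f d)"
    using assms(1,2) by (subst dir_avg_resample[of p]) (simp_all add: f_indep sum_distrib_right)
  also have "\<dots> \<le> dir_avg N (\<lambda>d. inf_norm M / real CARD('n) * f d)"
    by (intro dir_avg_mono mult_right_mono divide_right_mono inf_norm_ge_row_sum f_nonneg) simp
  finally show ?thesis
    by (simp only: dir_avg_cmult)
qed

lemma dir_avg_sq_component:
  fixes w :: "(nat \<Rightarrow> 'n::finite) \<Rightarrow> real^'n"
  assumes "p < N" and w_indep: "\<And>d i. w (d(p := i)) = w d"
  shows "dir_avg N (\<lambda>d. (w d $ d p)\<^sup>2) = dir_avg N (\<lambda>d. (norm (w d))\<^sup>2 / real CARD('n))"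
proof -
  have "(\<Sum>i\<in>UNIV. (v $ i)\<^sup>2) = (norm v)\<^sup>2" for v :: "real^'n"
    unfolding power2_norm_eq_inner inner_vec_def by (simp add: power2_eq_square)
  then show ?thesis
    using assms(1) by (subst dir_avg_resample[of p]) (simp_all add: w_indep)
qed

section \<open>An abstract delayed descent recursion\<close>

text \<open>For the iteration, \<open>E j\<close> is \<open>E\<^sub>j\<close>, \<open>G j\<close> the mean square of the stale gradient
  component, \<open>\<rho> = \<parallel>A\<parallel>\<^sub>\<infinity>/n\<close>, \<open>c = \<lambda>\<^sub>m\<^sub>i\<^sub>n/n\<close> and \<open>C = \<lambda>\<^sub>m\<^sub>a\<^sub>x/n\<close>; thus \<open>C / c = \<kappa>\<close>.\<close>

locale delayed_descent =
  fixes E G :: "nat \<Rightarrow> real" and k :: "nat \<Rightarrow> nat" and \<tau> :: nat and \<rho> c C :: real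
  assumes delay: "\<forall>j. j - \<tau> \<le> k j \<and> k j \<le> j"
    and E_Suc_le: "\<And>j. E (Suc j) \<le> E j - G j + (\<Sum>l\<in>{k j..<j}. \<rho> * (G j + G l))"
    and G_ge: "\<And>j. c * E (k j) \<le> G j"
    and G_le: "\<And>j. G j \<le> C * E (k j)"
    and E_Suc_ge: "\<And>j. (1 - C) * E j \<le> E (Suc j)"
    and E_nonneg: "\<And>j. 0 \<le> E j" and G_nonneg: "\<And>j. 0 \<le> G j"
    and rho_nonneg: "0 \<le> \<rho>" and c_nonneg: "0 \<le> c" and c_le_C: "c \<le> C"
    and C_pos: "0 < C" and C_less_1: "C < 1" and small_delay: "2 * \<rho> * \<tau> \<le> 1"
begin

abbreviation q :: real where "q \<equiv> 1 - C"

abbreviation \<nu> :: real where "\<nu> \<equiv> 1 - 2 * \<rho> * \<tau>"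

lemma k_le: "k j \<le> j"
  using delay by auto

lemma le_k_add: "j \<le> k j + \<tau>"
  using delay by (metis add.commute le_diff_conv)

lemma q_pos: "0 < q" and q_le_1: "q \<le> 1"
  using C_pos C_less_1 by auto

lemma E_Suc_le_stale:
  "E (Suc j) \<le> E j - (1 - \<rho> * \<tau>) * G j + \<rho> * (\<Sum>l\<in>{k j..<j}. G l)"
proof -
  have "(\<Sum>l\<in>{k j..<j}. \<rho> * (G j + G l)) = \<rho> * (card {k j..<j} * G j) + \<rho> * (\<Sum>l\<in>{k j..<j}. G l)"
    by (simp add: sum.distrib sum_distrib_left distrib_left)
  also have "\<dots> \<le> \<rho> * (\<tau> * G j) + \<rho> * (\<Sum>l\<in>{k j..<j}. G l)"
    using le_k_add[of j] rho_nonneg G_nonneg[of j]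
    by (intro add_right_mono mult_left_mono mult_right_mono) auto
  finally show ?thesis
    using E_Suc_le[of j] by (simp add: algebra_simps)
qed

lemma E_telescope:
  assumes "s \<le> m"
  shows "E m + (1 - \<rho> * \<tau>) * (\<Sum>j\<in>{s..<m}. G j) \<le> E s + \<rho> * (\<Sum>j\<in>{s..<m}. \<Sum>l\<in>{k j..<j}. G l)"
  using assms
proof (induction m rule: dec_induct)
  case (step m)
  then show ?case
    using E_Suc_le_stale[of m] by (simp add: algebra_simps)
qed simp

text \<open>Each \<open>G l\<close> occurs in the stale window \<open>{k j..<j}\<close> of at most \<open>\<tau>\<close> indices \<open>j\<close>.\<close>
lemma stale_window_sum_le:
  assumes "s \<le> m"
  shows "(\<Sum>j\<in>{s..<m}. \<Sum>l\<in>{k j..<j}. G l)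
       \<le> \<tau> * (\<Sum>l\<in>{s..<m}. G l) + \<tau> * (\<Sum>l\<in>{s - \<tau>..<s}. G l)"
proof -
  have window: "(\<Sum>l\<in>{k j..<j}. G l) = (\<Sum>l\<in>{s - \<tau>..<m}. if l \<in> {k j..<j} then G l else 0)"
    if "j \<in> {s..<m}" for j
  proof -
    have "{k j..<j} \<subseteq> {s - \<tau>..<m}"
      using that delay by auto (metis diff_le_mono le_trans)
    then have "sum G {k j..<j} = sum G ({s - \<tau>..<m} \<inter> {k j..<j})"
      by (simp only: Int_absorb1)
    then show ?thesis
      by (simp only: sum.inter_restrict[OF finite_atLeastLessThan])
  qed
  have count: "card {j\<in>{s..<m}. l \<in> {k j..<j}} \<le> \<tau>" for l
  proof -
    have "{j\<in>{s..<m}. l \<in> {k j..<j}} \<subseteq> {Suc l..l + \<tau>}"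
      using le_k_add by (auto simp: Suc_le_eq) (metis add_le_mono1 le_trans)
    then have "card {j\<in>{s..<m}. l \<in> {k j..<j}} \<le> card {Suc l..l + \<tau>}"
      by (rule card_mono[OF finite_atLeastAtMost])
    then show ?thesis
      by simp
  qed
  have "(\<Sum>j\<in>{s..<m}. \<Sum>l\<in>{k j..<j}. G l)
      = (\<Sum>j\<in>{s..<m}. \<Sum>l\<in>{s - \<tau>..<m}. if l \<in> {k j..<j} then G l else 0)"
    using window by (rule sum.cong[OF refl])
  also have "\<dots> = (\<Sum>l\<in>{s - \<tau>..<m}. real (card {j\<in>{s..<m}. l \<in> {k j..<j}}) * G l)"
    by (subst sum.swap) (simp add: sum.inter_filter[symmetric])
  also have "\<dots> \<le> (\<Sum>l\<in>{s - \<tau>..<m}. \<tau> * G l)"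
    using count G_nonneg by (intro sum_mono mult_right_mono) auto
  also have "\<dots> = \<tau> * (\<Sum>l\<in>{s - \<tau>..<s}. G l) + \<tau> * (\<Sum>l\<in>{s..<m}. G l)"
    using sum.atLeastLessThan_concat[of "s - \<tau>" s m G] assms
    by (simp add: sum_distrib_left[symmetric] distrib_left[symmetric])
  finally show ?thesis
    by simp
qed

lemma E_block_le:
  assumes "s \<le> m"
  shows "E m \<le> E s - \<nu> * (\<Sum>j\<in>{s..<m}. G j) + \<rho> * \<tau> * (\<Sum>l\<in>{s - \<tau>..<s}. G l)"
  using E_telescope[OF assms] mult_left_mono[OF stale_window_sum_le[OF assms] rho_nonneg]
  by (simp add: algebra_simps)

lemma E_ge_geometric:
  assumes "i \<le> j"
  shows "q ^ (j - i) * E i \<le> E j"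
  using assms
proof (induction j rule: dec_induct)
  case (step j)
  have "q ^ (Suc j - i) * E i = q * (q ^ (j - i) * E i)"
    using step.hyps(1) by (simp add: Suc_diff_le)
  also have "\<dots> \<le> q * E j"
    using step.IH q_pos by (intro mult_left_mono) auto
  also have "\<dots> \<le> E (Suc j)"
    by (rule E_Suc_ge)
  finally show ?case .
qed simp

lemma G_ge_geometric:
  assumes "s \<le> k j"
  shows "c * q ^ (j - s) * E s \<le> G j"
proof -
  have "q ^ (j - s) * E s \<le> q ^ (k j - s) * E s"
    using k_le[of j] q_pos q_le_1 E_nonneg by (intro mult_right_mono power_decreasing) auto
  also have "\<dots> \<le> E (k j)"
    using E_ge_geometric assms by blast
  finally have "c * (q ^ (j - s) * E s) \<le> c * E (k j)"
    using c_nonneg by (rule mult_left_mono)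
  then show ?thesis
    using G_ge[of j] by (simp add: mult.assoc)
qed

lemma G_le_later_E:
  assumes "k l \<le> s" "s - k l \<le> a"
  shows "q ^ a * G l \<le> C * E s"
proof -
  have "q ^ a * G l \<le> C * (q ^ a * E (k l))"
    using mult_left_mono[OF G_le[of l], of "q ^ a"] q_pos by (simp add: algebra_simps)
  also have "q ^ a * E (k l) \<le> q ^ (s - k l) * E (k l)"
    using assms q_pos q_le_1 E_nonneg by (intro mult_right_mono power_decreasing) auto
  also have "\<dots> \<le> E s"
    using E_ge_geometric assms(1) by blast
  finally show ?thesis
    using C_pos by simp
qed

lemma G_sum_ge:
  assumes "\<And>t. t < T \<Longrightarrow> s \<le> k (s + a + t)" and "q ^ T \<le> 1 / 2"
  shows "c * q ^ a / (2 * C) * E s \<le> (\<Sum>t<T. G (s + a + t))"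
proof -
  have "c * q ^ a / (2 * C) * E s \<le> c * q ^ a * E s * (1 - q ^ T) / C"
    using assms(2) c_nonneg q_pos E_nonneg[of s] C_pos
    by (simp add: field_simps mult_left_mono)
  also have "\<dots> = (\<Sum>t<T. c * q ^ (s + a + t - s) * E s)"
    using C_pos by (simp add: power_add sum_gp_strict sum_distrib_left[symmetric]
        sum_distrib_right[symmetric] algebra_simps)
  also have "\<dots> \<le> (\<Sum>t<T. G (s + a + t))"
    using assms(1) by (intro sum_mono G_ge_geometric) auto
  finally show ?thesis .
qed

lemma nu_nonneg: "0 \<le> \<nu>"
  using small_delay by simp

lemma E_contraction_first:
  assumes "q ^ m \<le> 1 / 2"
  shows "E m \<le> (1 - \<nu> / (2 * (C / c))) * E 0"
proof -
  have "c / (2 * C) * E 0 \<le> (\<Sum>j\<in>{0..<m}. G j)"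
    using G_sum_ge[of m 0 0] assms by (simp add: atLeast0LessThan)
  then have "\<nu> * (c / (2 * C) * E 0) \<le> \<nu> * (\<Sum>j\<in>{0..<m}. G j)"
    using nu_nonneg by (rule mult_left_mono)
  moreover have "E m \<le> E 0 - \<nu> * (\<Sum>j\<in>{0..<m}. G j)"
    using E_block_le[of 0 m] by simp
  moreover have "\<nu> / (2 * (C / c)) = \<nu> * (c / (2 * C))"
    by (cases "c = 0") (simp_all add: field_simps)
  ultimately show ?thesis
    by (simp add: algebra_simps)
qed

lemma G_sum_before_le:
  "(\<Sum>l\<in>{s - \<tau>..<s}. G l) \<le> \<tau> * (C * E s / q ^ (2 * \<tau>))"
proof -
  have "G l \<le> C * E s / q ^ (2 * \<tau>)" if "l \<in> {s - \<tau>..<s}" for l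
  proof -
    have "q ^ (2 * \<tau>) * G l \<le> C * E s"
      using that k_le[of l] le_k_add[of l] by (intro G_le_later_E) auto
    then show ?thesis
      using q_pos by (simp add: field_simps)
  qed
  then have "(\<Sum>l\<in>{s - \<tau>..<s}. G l) \<le> card {s - \<tau>..<s} * (C * E s / q ^ (2 * \<tau>))"
    using sum_mono[of "{s - \<tau>..<s}" G "\<lambda>_. C * E s / q ^ (2 * \<tau>)"] by simp
  also have "\<dots> \<le> \<tau> * (C * E s / q ^ (2 * \<tau>))"
    using C_pos E_nonneg[of s] q_pos by (intro mult_right_mono) auto
  finally show ?thesis .
qed

lemma E_contraction_block:
  assumes "q ^ T \<le> 1 / 2"
  shows "E (s + \<tau> + T) \<le> (1 - \<nu> * q ^ \<tau> / (2 * (C / c)) + \<rho> * real \<tau> ^ 2 * C / q ^ (2 * \<tau>)) * E s"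
proof -
  let ?m = "s + \<tau> + T"
  have "s \<le> k (s + \<tau> + t)" for t
    using le_k_add[of "s + \<tau> + t"] by simp
  then have "c * q ^ \<tau> / (2 * C) * E s \<le> (\<Sum>t<T. G (s + \<tau> + t))"
    using assms by (rule G_sum_ge)
  also have "\<dots> = (\<Sum>j\<in>{s + \<tau>..<?m}. G j)"
    by (simp add: sum.atLeastLessThan_shift_0[of _ "s + \<tau>"] atLeast0LessThan add.assoc)
  also have "\<dots> \<le> (\<Sum>j\<in>{s..<?m}. G j)"
    using G_nonneg by (intro sum_mono2) auto
  finally have "\<nu> * (c * q ^ \<tau> / (2 * C) * E s) \<le> \<nu> * (\<Sum>j\<in>{s..<?m}. G j)"
    using nu_nonneg by (rule mult_left_mono)
  moreover have "\<rho> * \<tau> * (\<Sum>l\<in>{s - \<tau>..<s}. G l) \<le> \<rho> * \<tau> * (\<tau> * (C * E s / q ^ (2 * \<tau>)))"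
    using G_sum_before_le rho_nonneg by (intro mult_left_mono) auto
  moreover have "E ?m \<le> E s - \<nu> * (\<Sum>j\<in>{s..<?m}. G j) + \<rho> * \<tau> * (\<Sum>l\<in>{s - \<tau>..<s}. G l)"
    by (rule E_block_le) simp
  ultimately show ?thesis
    by (simp add: algebra_simps power2_eq_square)
qed

lemma block_factor_nonneg:
  "0 \<le> 1 - \<nu> * q ^ \<tau> / (2 * (C / c)) + \<rho> * real \<tau> ^ 2 * C / q ^ (2 * \<tau>)"
proof -
  have "\<nu> * q ^ \<tau> \<le> 1"
    using nu_nonneg rho_nonneg q_pos q_le_1 by (simp add: mult_le_one power_le_one)
  moreover have "\<nu> * q ^ \<tau> / (2 * (C / c)) \<le> \<nu> * q ^ \<tau> / 2"
  proof (cases "c = 0")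
    case False
    then have "1 \<le> C / c"
      using c_nonneg c_le_C by simp
    then show ?thesis
      using nu_nonneg q_pos by (intro divide_left_mono) auto
  qed (use nu_nonneg q_pos in simp)
  ultimately have "\<nu> * q ^ \<tau> / (2 * (C / c)) \<le> 1"
    by linarith
  then show ?thesis
    using rho_nonneg C_pos q_pos by simp
qed

lemma E_contraction_iterated:
  assumes "q ^ T \<le> 1 / 2" and "1 \<le> r" and "r * (T + \<tau>) \<le> m"
  shows "E m \<le> (1 - \<nu> / (2 * (C / c)))
              * (1 - \<nu> * q ^ \<tau> / (2 * (C / c)) + \<rho> * real \<tau> ^ 2 * C / q ^ (2 * \<tau>)) ^ (r - 1) * E 0"
  using assms(2,3)
proof (induction r arbitrary: m rule: nat_induct_at_least)
  case base
  have "q ^ m \<le> q ^ T"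
    using base q_pos q_le_1 by (intro power_decreasing) auto
  then show ?case
    using E_contraction_first assms(1) by simp
next
  case (Suc r)
  let ?f = "1 - \<nu> * q ^ \<tau> / (2 * (C / c)) + \<rho> * real \<tau> ^ 2 * C / q ^ (2 * \<tau>)"
  define s where "s = m - (T + \<tau>)"
  have "m = s + \<tau> + T" "r * (T + \<tau>) \<le> s"
    using Suc.prems unfolding s_def by auto
  then have "E m \<le> ?f * E s"
    using E_contraction_block[OF assms(1)] by simp
  also have "\<dots> \<le> ?f * ((1 - \<nu> / (2 * (C / c))) * ?f ^ (r - 1) * E 0)"
    using Suc.IH[OF \<open>r * (T + \<tau>) \<le> s\<close>] block_factor_nonneg by (rule mult_left_mono)
  also have "x * (y * x ^ (r - 1) * z) = y * x ^ (Suc r - 1) * z" for x y z :: real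
    using Suc.hyps by (cases r) (simp_all add: mult_ac)
  finally show ?case .
qed

end

section \<open>The consistent-read iteration\<close>

lemma cr_hist_stable: "i \<le> j \<Longrightarrow> cr_hist A b x0 \<beta> k d j i = cr_hist A b x0 \<beta> k d i i"
  by (induction j) (auto simp: Let_def le_Suc_eq)

lemma cr_iter_cong: "(\<forall>i<j. d i = d' i) \<Longrightarrow> cr_iter A b x0 \<beta> k d j = cr_iter A b x0 \<beta> k d' j"
proof -
  assume "\<forall>i<j. d i = d' i"
  then have "cr_hist A b x0 \<beta> k d j = cr_hist A b x0 \<beta> k d' j"
    by (induction j) (auto simp: Let_def)
  then show ?thesis
    unfolding cr_iter_def by simp
qed

lemma cr_iter_Suc:
  assumes "k j \<le> j"
  shows "cr_iter A b x0 \<beta> k d (Suc j) = cr_iter A b x0 \<beta> k d j +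
     (\<beta> * A_inner A (matrix_inv A *v b - cr_iter A b x0 \<beta> k d (k j)) (axis (d j) 1)) *\<^sub>R axis (d j) 1"
  unfolding cr_iter_def using cr_hist_stable[OF assms, of A b x0 \<beta> k d] by (simp add: Let_def)

locale consistent_read = spd_unit_diag A
  for A :: "real^'n^'n" +
  fixes b x0 :: "real^'n" and k :: "nat \<Rightarrow> nat" and \<tau> :: nat
  assumes delay: "\<forall>j. j - \<tau> \<le> k j \<and> k j \<le> j"
begin

definition err :: "(nat \<Rightarrow> 'n) \<Rightarrow> nat \<Rightarrow> real^'n" where
  "err d j = cr_iter A b x0 1 k d j - matrix_inv A *v b"

definition energy :: "(nat \<Rightarrow> 'n) \<Rightarrow> nat \<Rightarrow> real" where
  "energy d j = err d j \<bullet> (A *v err d j)"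

text \<open>Minus the paper's \<open>\<gamma>\<^sub>j\<close>: the \<open>d\<^sub>j\<close>-th component of the gradient at the stale iterate.\<close>
definition stale_grad :: "(nat \<Rightarrow> 'n) \<Rightarrow> nat \<Rightarrow> real" where
  "stale_grad d j = (A *v err d (k j)) $ d j"

definition mean_sq_grad :: "nat \<Rightarrow> real" where
  "mean_sq_grad j = measure_pmf.expectation (dir_pmf (Suc j)) (\<lambda>d. (stale_grad d j)\<^sup>2)"

lemma k_le: "k j \<le> j"
  using delay by auto

lemma err_Suc: "err d (Suc j) = err d j - stale_grad d j *\<^sub>R axis (d j) 1"
proof -
  have "A_inner A (matrix_inv A *v b - cr_iter A b x0 1 k d (k j)) (axis (d j) 1) = - stale_grad d j"
    unfolding A_inner_def stale_grad_def err_def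
    by (simp add: inner_axis' matrix_vector_mult_diff_distrib)
  then show ?thesis
    unfolding err_def using cr_iter_Suc[of k j A b x0 1 d, OF k_le] by (simp add: algebra_simps)
qed

lemma err_cong: "(\<forall>i<j. d i = d' i) \<Longrightarrow> err d j = err d' j"
  unfolding err_def using cr_iter_cong by metis

lemma err_upd: "j \<le> p \<Longrightarrow> err (d(p := i)) j = err d j"
  using err_cong[of j "d(p := i)" d] by simp

lemma stale_grad_upd: "p \<noteq> j \<Longrightarrow> k j \<le> p \<Longrightarrow> stale_grad (d(p := i)) j = stale_grad d j"
  unfolding stale_grad_def by (simp add: err_upd)

lemma energy_Suc:
  "energy d (Suc j) = energy d j - 2 * stale_grad d j * (A *v err d j) $ d j + (stale_grad d j)\<^sup>2"
  unfolding energy_def err_Suc quadratic_form_minus_axis[OF symmetric] using unit_diag by simp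

lemma grad_component_eq_stale:
  assumes "i \<le> j"
  shows "(A *v err d j) $ p = (A *v err d i) $ p - (\<Sum>l\<in>{i..<j}. stale_grad d l * A $ p $ d l)"
  using assms
  by (induction j rule: dec_induct)
    (simp_all add: err_Suc matrix_vector_mult_diff_distrib matrix_vector_mult_scaleR
      matrix_vector_mult_axis_component)

text \<open>The stale cross terms are controlled by \<open>2 a b \<le> a\<^sup>2 + b\<^sup>2\<close>.\<close>
lemma energy_Suc_le:
  "energy d (Suc j) \<le> energy d j - (stale_grad d j)\<^sup>2
     + (\<Sum>l\<in>{k j..<j}. \<bar>A $ d j $ d l\<bar> * ((stale_grad d j)\<^sup>2 + (stale_grad d l)\<^sup>2))"
proof -
  let ?g = "stale_grad d"
  have "energy d (Suc j) = energy d j - (?g j)\<^sup>2 + (\<Sum>l\<in>{k j..<j}. 2 * ?g j * ?g l * A $ d j $ d l)"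
    unfolding energy_Suc grad_component_eq_stale[OF k_le, of d j "d j"]
    by (simp add: stale_grad_def[symmetric] sum_distrib_left algebra_simps power2_eq_square)
  also have "\<dots> \<le> energy d j - (?g j)\<^sup>2 + (\<Sum>l\<in>{k j..<j}. \<bar>A $ d j $ d l\<bar> * ((?g j)\<^sup>2 + (?g l)\<^sup>2))"
  proof (intro add_left_mono sum_mono)
    fix l
    have "2 * ?g j * ?g l * A $ d j $ d l \<le> \<bar>2 * ?g j * ?g l\<bar> * \<bar>A $ d j $ d l\<bar>"
      by (metis abs_ge_self abs_mult)
    also have "\<dots> \<le> ((?g j)\<^sup>2 + (?g l)\<^sup>2) * \<bar>A $ d j $ d l\<bar>"
      using sum_squares_bound[of "\<bar>?g j\<bar>" "\<bar>?g l\<bar>"] by (intro mult_right_mono) (simp_all add: abs_mult)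
    finally show "2 * ?g j * ?g l * A $ d j $ d l \<le> \<bar>A $ d j $ d l\<bar> * ((?g j)\<^sup>2 + (?g l)\<^sup>2)"
      by (simp add: mult.commute)
  qed
  finally show ?thesis .
qed

lemma energy_Suc_ge: "energy d j - ((A *v err d j) $ d j)\<^sup>2 \<le> energy d (Suc j)"
proof -
  have "0 \<le> (stale_grad d j - (A *v err d j) $ d j)\<^sup>2"
    by simp
  then show ?thesis
    unfolding energy_Suc by (simp add: power2_eq_square algebra_simps)
qed

lemma cr_err_eq_dir_avg: "j \<le> N \<Longrightarrow> cr_err A b x0 1 k j = dir_avg N (\<lambda>d. energy d j)"
  unfolding cr_err_def A_norm_sq_def A_inner_def energy_def err_def[symmetric]
  by (rule expectation_dir_pmf_horizon) (auto dest: err_cong)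

lemma mean_sq_grad_eq_dir_avg:
  assumes "j < N"
  shows "mean_sq_grad j = dir_avg N (\<lambda>d. (stale_grad d j)\<^sup>2)"
  unfolding mean_sq_grad_def
proof (rule expectation_dir_pmf_horizon)
  fix d d' :: "nat \<Rightarrow> 'n"
  assume "\<forall>i<Suc j. d i = d' i"
  then show "(stale_grad d j)\<^sup>2 = (stale_grad d' j)\<^sup>2"
    using k_le[of j] err_cong[of "k j" d d'] by (simp add: stale_grad_def)
qed (use assms in simp)

lemma cr_err_Suc_le:
  "cr_err A b x0 1 k (Suc j) \<le> cr_err A b x0 1 k j - mean_sq_grad j
     + (\<Sum>l\<in>{k j..<j}. inf_norm A / real CARD('n) * (mean_sq_grad j + mean_sq_grad l))"
proof -
  let ?N = "Suc j" and ?\<rho> = "inf_norm A / real CARD('n)"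
  let ?g = "\<lambda>l d. (stale_grad d l)\<^sup>2"
  have "cr_err A b x0 1 k (Suc j)
      \<le> dir_avg ?N (\<lambda>d. energy d j - ?g j d + (\<Sum>l\<in>{k j..<j}. \<bar>A $ d j $ d l\<bar> * (?g j d + ?g l d)))"
    unfolding cr_err_eq_dir_avg[OF order.refl] by (intro dir_avg_mono energy_Suc_le)
  also have "\<dots> = cr_err A b x0 1 k j - mean_sq_grad j
      + (\<Sum>l\<in>{k j..<j}. dir_avg ?N (\<lambda>d. \<bar>A $ d j $ d l\<bar> * ?g j d) + dir_avg ?N (\<lambda>d. \<bar>A $ d j $ d l\<bar> * ?g l d))"
    by (simp add: dir_avg_add dir_avg_diff dir_avg_sum distrib_left cr_err_eq_dir_avg[of j ?N]
        mean_sq_grad_eq_dir_avg[of j ?N])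
  also have "\<dots> \<le> cr_err A b x0 1 k j - mean_sq_grad j + (\<Sum>l\<in>{k j..<j}. ?\<rho> * (mean_sq_grad j + mean_sq_grad l))"
  proof (intro add_left_mono sum_mono)
    fix l
    assume l: "l \<in> {k j..<j}"
    have "dir_avg ?N (\<lambda>d. \<bar>A $ d j $ d l\<bar> * ?g j d) \<le> ?\<rho> * dir_avg ?N (?g j)"
      using l by (intro dir_avg_abs_entry_le) (auto simp: stale_grad_upd)
    moreover have "(\<lambda>d. \<bar>A $ d j $ d l\<bar> * ?g l d) = (\<lambda>d. \<bar>A $ d l $ d j\<bar> * ?g l d)"
      by (rule ext) (metis entry_symmetric)
    moreover have "dir_avg ?N (\<lambda>d. \<bar>A $ d l $ d j\<bar> * ?g l d) \<le> ?\<rho> * dir_avg ?N (?g l)"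
      using l k_le[of l] by (intro dir_avg_abs_entry_le) (auto simp: stale_grad_upd)
    moreover have "mean_sq_grad j = dir_avg ?N (?g j)" "mean_sq_grad l = dir_avg ?N (?g l)"
      using l by (auto intro: mean_sq_grad_eq_dir_avg)
    ultimately show "dir_avg ?N (\<lambda>d. \<bar>A $ d j $ d l\<bar> * ?g j d) + dir_avg ?N (\<lambda>d. \<bar>A $ d j $ d l\<bar> * ?g l d)
        \<le> ?\<rho> * (mean_sq_grad j + mean_sq_grad l)"
      by (simp add: distrib_left)
  qed
  finally show ?thesis .
qed

lemma mean_sq_grad_eq_norm:
  "mean_sq_grad j = dir_avg (Suc j) (\<lambda>d. (norm (A *v err d (k j)))\<^sup>2 / real CARD('n))"
  unfolding mean_sq_grad_eq_dir_avg[of j "Suc j", OF lessI] stale_grad_def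
  using k_le[of j] by (intro dir_avg_sq_component) (simp_all add: err_upd)

lemma mean_sq_grad_ge: "lam_min A / real CARD('n) * cr_err A b x0 1 k (k j) \<le> mean_sq_grad j"
proof -
  have "lam_min A / real CARD('n) * cr_err A b x0 1 k (k j)
      = dir_avg (Suc j) (\<lambda>d. lam_min A * energy d (k j) / real CARD('n))"
    using k_le[of j] by (simp add: cr_err_eq_dir_avg[of "k j" "Suc j"] dir_avg_cmult[symmetric])
  also have "\<dots> \<le> mean_sq_grad j"
    unfolding mean_sq_grad_eq_norm energy_def
    by (intro dir_avg_mono divide_right_mono norm_mult_sq_ge) simp
  finally show ?thesis .
qed

lemma mean_sq_grad_le: "mean_sq_grad j \<le> lam_max A / real CARD('n) * cr_err A b x0 1 k (k j)"
proof -
  have "mean_sq_grad j \<le> dir_avg (Suc j) (\<lambda>d. lam_max A * energy d (k j) / real CARD('n))"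
    unfolding mean_sq_grad_eq_norm energy_def
    by (intro dir_avg_mono divide_right_mono norm_mult_sq_le) simp
  also have "\<dots> = lam_max A / real CARD('n) * cr_err A b x0 1 k (k j)"
    using k_le[of j] by (simp add: cr_err_eq_dir_avg[of "k j" "Suc j"] dir_avg_cmult[symmetric])
  finally show ?thesis .
qed

lemma cr_err_Suc_ge:
  "(1 - lam_max A / real CARD('n)) * cr_err A b x0 1 k j \<le> cr_err A b x0 1 k (Suc j)"
proof -
  let ?N = "Suc j"
  have "dir_avg ?N (\<lambda>d. ((A *v err d j) $ d j)\<^sup>2) = dir_avg ?N (\<lambda>d. (norm (A *v err d j))\<^sup>2 / real CARD('n))"
    by (intro dir_avg_sq_component) (simp_all add: err_upd)
  also have "\<dots> \<le> dir_avg ?N (\<lambda>d. lam_max A / real CARD('n) * energy d j)"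
    unfolding energy_def by (intro dir_avg_mono) (simp add: divide_right_mono norm_mult_sq_le)
  also have "\<dots> = lam_max A / real CARD('n) * cr_err A b x0 1 k j"
    by (simp only: dir_avg_cmult cr_err_eq_dir_avg[of j ?N, OF le_SucI[OF order.refl]])
  finally have "(1 - lam_max A / real CARD('n)) * cr_err A b x0 1 k j
      \<le> dir_avg ?N (\<lambda>d. energy d j - ((A *v err d j) $ d j)\<^sup>2)"
    by (simp add: dir_avg_diff cr_err_eq_dir_avg[of j ?N] algebra_simps)
  also have "\<dots> \<le> cr_err A b x0 1 k (Suc j)"
    unfolding cr_err_eq_dir_avg[OF order.refl] by (intro dir_avg_mono energy_Suc_ge)
  finally show ?thesis .
qed

lemma delayed_descent_cr_err:
  assumes "CARD('n) \<ge> 2" and "2 * (inf_norm A / real CARD('n)) * real \<tau> \<le> 1"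
  shows "delayed_descent (cr_err A b x0 1 k) mean_sq_grad k \<tau>
    (inf_norm A / real CARD('n)) (lam_min A / real CARD('n)) (lam_max A / real CARD('n))"
proof
  show "0 \<le> cr_err A b x0 1 k j" for j
    unfolding cr_err_eq_dir_avg[OF order.refl] energy_def by (intro dir_avg_nonneg quadratic_form_nonneg)
  show "0 \<le> mean_sq_grad j" for j
    unfolding mean_sq_grad_eq_norm by (intro dir_avg_nonneg) simp
  show "lam_min A / real CARD('n) \<le> lam_max A / real CARD('n)"
    using lam_min_le_lam_max by (simp add: divide_right_mono)
  show "0 < lam_max A / real CARD('n)" "lam_max A / real CARD('n) < 1"
    using lam_max_ge_1 lam_max_less_card[OF assms(1)] by simp_all
  show "0 \<le> inf_norm A / real CARD('n)"
    using inf_norm_nonneg[of A] by simp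
qed (use delay cr_err_Suc_le mean_sq_grad_ge mean_sq_grad_le cr_err_Suc_ge lam_min_pos assms(2) in simp_all)

end

lemma power_le_of_ln_div_le:
  fixes q a :: real
  assumes "0 < q" "q < 1" "0 < a" "ln a / ln q \<le> real m"
  shows "q ^ m \<le> a"
proof -
  have "ln (q ^ m) \<le> ln a"
    using assms by (simp add: ln_realpow divide_le_eq mult.commute)
  then show ?thesis
    using assms by simp
qed

theorem theorem1:
  fixes A :: "real^'n^'n" and b x0 :: "real^'n" and \<tau> :: nat and k :: "nat \<Rightarrow> nat"
  assumes n2: "CARD('n) \<ge> 2"
    and spdA: "spd A"
    and diag: "\<forall>i. A $ i $ i = 1"
    and delay: "\<forall>j. j - \<tau> \<le> k j \<and> k j \<le> j"
    and small: "2 * (inf_norm A / real CARD('n)) * real \<tau> < 1"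
  shows
   "(let n = real CARD('n); lmax = lam_max A; \<kappa> = lam_max A / lam_min A;
         \<rho> = inf_norm A / n; \<nu> = 1 - 2 * \<rho> * real \<tau>;
         E = cr_err A b x0 1 k;
         T0 = nat \<lceil>ln (1/2) / ln (1 - lmax / n)\<rceil>; T = T0 + \<tau>;
         chi = \<rho> * real \<tau>^2 * lmax / (1 - lmax / n)^(2*\<tau>) / n
     in (\<forall>m::nat. real m \<ge> ln (1/2) / ln (1 - lmax / n) \<longrightarrow>
            E m \<le> (1 - \<nu> / (2 * \<kappa>)) * E 0)
      \<and> (\<forall>r m::nat. r \<ge> 1 \<longrightarrow> m \<ge> r * T \<longrightarrow>
            E m \<le> (1 - \<nu> / (2 * \<kappa>))
                   * (1 - \<nu> * (1 - lmax / n)^\<tau> / (2 * \<kappa>) + chi)^(r - 1) * E 0))"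
proof -
  interpret consistent_read A b x0 k \<tau>
    using spdA diag delay by unfold_locales
  interpret delayed_descent "cr_err A b x0 1 k" mean_sq_grad k \<tau> "inf_norm A / real CARD('n)"
      "lam_min A / real CARD('n)" "lam_max A / real CARD('n)"
    using delayed_descent_cr_err n2 small by simp
  have q: "0 < q" "q < 1"
    using q_pos C_pos by auto
  have ratio: "(lam_max A / real CARD('n)) / (lam_min A / real CARD('n)) = lam_max A / lam_min A"
    by simp
  have chi: "inf_norm A / real CARD('n) * real \<tau> ^ 2 * (lam_max A / real CARD('n)) / q ^ (2 * \<tau>)
      = inf_norm A / real CARD('n) * real \<tau> ^ 2 * lam_max A / q ^ (2 * \<tau>) / real CARD('n)"
    by simp
  have "q ^ nat \<lceil>ln (1/2) / ln q\<rceil> \<le> 1/2"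
    using q by (intro power_le_of_ln_div_le) (auto intro: real_nat_ceiling_ge)
  note part_b = E_contraction_iterated[OF this, unfolded ratio chi]
  have part_a: "cr_err A b x0 1 k m \<le> (1 - \<nu> / (2 * (lam_max A / lam_min A))) * cr_err A b x0 1 k 0"
    if "ln (1/2) / ln q \<le> real m" for m
    using q that by (intro E_contraction_first[unfolded ratio] power_le_of_ln_div_le) auto
  show ?thesis
    unfolding Let_def using part_a part_b by blast
qed

end
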